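(* For every $[p,q]\in\hat D_n$, the evaluation functional $\delta_{[p,q]}:\mathcal{A}(D_n)\to\mathbb{C}$, $a\mapsto\hat a([p,q])$, is a continuous unital homomorphism for the pointwise product, and it is a character (i.e. additionally satisfies $\delta_{[p,q]}(a^* )=\overline{\delta_{[p,q]}(a)}$ for all $a$) if and only if $[p,q]\in D_{n,\mathrm{ext}}$.
   Context: Fix $n\ge1$. $D_n=Z/U(1)$, $Z=\{r\in\mathbb{C}^{1+n}:-|r^0|^2+\sum_{i\ge1}|r^i|^2=-1\}$. $\hat D_n=\hat Z/\mathbb{C}^*$, $\hat Z=\{(p,q)\in\mathbb{C}^{1+n}\times\mathbb{C}^{1+n}:-p^0q^0+\sum_{i\ge1}p^iq^i=-1\}$, $z\cdot(p,q)=(zp,q/z)$. $\Delta_D:D_n\to\hat D_n$, $[r]\mapsto[r,\bar r]$. $\tau([p,q])=[\bar q,\bar p]$ is an anti-holomorphic involution of $\hat D_n$, and $D_{n,\mathrm{ext}}=\{x\in\hat D_n:\tau(x)=x\}$. $\mathcal{A}(D_n)=\{\hat a\circ\Delta_D:\hat a\in\mathcal{O}(\hat D_n)\}$, where $\hat a$ is uniquely determined by $a$; it is a commutative unital $*$-algebra with pointwise operations and $a^*=\bar a$ (so $\widehat{a^*}=\overline{\hat a\circ\tau}$), and a Fréchet space with seminorms $\|a\|_{D_n,K}=\sup_K|\hat a|$, $K\subseteq\hat D_n$ compact. *)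

theory Defs
  imports "HOL-Analysis.Analysis"
begin

text \<open>Points of C^(1+n) are vectors indexed by 'n option (None = index 0, Some i = index i),
  so n = CARD('n) >= 1.  Points of C^(1+n) x C^(1+n) are pairs (p,q).\<close>

type_synonym 'n cpt = "complex ^ ('n option)"
type_synonym 'n hpt = "'n cpt \<times> 'n cpt"

definition cscale :: "complex \<Rightarrow> complex ^ 'i \<Rightarrow> complex ^ 'i" where
  "cscale c v = (\<chi> j. c * v $ j)"

definition cconj :: "complex ^ 'i \<Rightarrow> complex ^ 'i" where
  "cconj v = (\<chi> j. cnj (v $ j))"

definition bform :: "('n::finite) cpt \<Rightarrow> 'n cpt \<Rightarrow> complex" where
  "bform p q = - (p $ None * q $ None) + (\<Sum>i\<in>UNIV. p $ Some i * q $ Some i)"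

definition hatZ :: "('n::finite) hpt set" where
  "hatZ = {(p, q). bform p q = -1}"

definition orbit :: "('n::finite) hpt \<Rightarrow> 'n hpt set" where
  "orbit z = {(cscale c (fst z), cscale (inverse c) (snd z)) | c. c \<noteq> 0}"

definition hatD :: "('n::finite) hpt set set" where
  "hatD = orbit ` hatZ"

definition hatD_top :: "('n::finite) hpt set topology" where
  "hatD_top = topology (\<lambda>U. U \<subseteq> hatD \<and>
       openin (top_of_set hatZ) {z \<in> hatZ. orbit z \<in> U})"

definition tau :: "('n::finite) hpt set \<Rightarrow> 'n hpt set" where
  "tau x = (\<lambda>(p, q). (cconj q, cconj p)) ` x"

definition Dext :: "('n::finite) hpt set set" where
  "Dext = {x \<in> hatD. tau x = x}"

text \<open>Holomorphy on an open subset of the ambient space C^(1+n) x C^(1+n):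
  Frechet differentiable with complex-linear derivative.\<close>
definition iscale :: "('n::finite) hpt \<Rightarrow> 'n hpt" where
  "iscale w = (cscale \<i> (fst w), cscale \<i> (snd w))"

definition holo_on :: "(('n::finite) hpt \<Rightarrow> complex) \<Rightarrow> 'n hpt set \<Rightarrow> bool" where
  "holo_on G U \<longleftrightarrow> (\<forall>z\<in>U. \<exists>D. (G has_derivative D) (at z) \<and> (\<forall>w. D (iscale w) = \<i> * D w))"

text \<open>Holomorphy on the complex submanifold hat Z: locally the restriction of an ambient
  holomorphic function.\<close>
definition holo_on_hatZ :: "(('n::finite) hpt \<Rightarrow> complex) \<Rightarrow> bool" where
  "holo_on_hatZ F \<longleftrightarrow> (\<forall>z\<in>hatZ. \<exists>U G. open U \<and> z \<in> U \<and> holo_on G U \<and>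
        (\<forall>w\<in>U \<inter> hatZ. G w = F w))"

text \<open>O(hat D_n): functions on hat D_n whose pullback to hat Z is holomorphic.
  (Values off hatD are irrelevant.)\<close>
definition Ohat :: "(('n::finite) hpt set \<Rightarrow> complex) set" where
  "Ohat = {f. holo_on_hatZ (\<lambda>z. f (orbit z))}"

text \<open>A(D_n) is identified with O(hat D_n) via a |-> hat a.  Star: hat(a^*) = conj(hat a o tau).\<close>
definition astar :: "(('n::finite) hpt set \<Rightarrow> complex) \<Rightarrow> ('n hpt set \<Rightarrow> complex)" where
  "astar f = (\<lambda>x. cnj (f (tau x)))"

definition seminorm :: "('n::finite) hpt set set \<Rightarrow> ('n hpt set \<Rightarrow> complex) \<Rightarrow> real" where
  "seminorm K f = (SUP x\<in>K. norm (f x))"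

definition A_top :: "(('n::finite) hpt set \<Rightarrow> complex) topology" where
  "A_top = topology_generated_by
     {{g \<in> Ohat. seminorm K (\<lambda>x. g x - f x) < e} | f K e.
        f \<in> Ohat \<and> compactin hatD_top K \<and> e > 0}"

definition aadd :: "('a \<Rightarrow> complex) \<Rightarrow> ('a \<Rightarrow> complex) \<Rightarrow> ('a \<Rightarrow> complex)" where
  "aadd f g = (\<lambda>y. f y + g y)"
definition asmul :: "complex \<Rightarrow> ('a \<Rightarrow> complex) \<Rightarrow> ('a \<Rightarrow> complex)" where
  "asmul c f = (\<lambda>y. c * f y)"
definition amul :: "('a \<Rightarrow> complex) \<Rightarrow> ('a \<Rightarrow> complex) \<Rightarrow> ('a \<Rightarrow> complex)" where
  "amul f g = (\<lambda>y. f y * g y)"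
definition aone :: "'a \<Rightarrow> complex" where
  "aone = (\<lambda>y. 1)"
definition delta :: "('n::finite) hpt set \<Rightarrow> ('n hpt set \<Rightarrow> complex) \<Rightarrow> complex" where
  "delta x f = f x"

end

theory Submission
  imports Defs
begin

text \<open>Evaluation at a point x of hat D_n is continuous because the seminorm of the compact set
  {x} is the modulus of the value at x; additivity, homogeneity, multiplicativity and unitality
  are pointwise identities. For the star condition, test it on the functions [p,q] \<mapsto> p^i q^j,
  which are holomorphic and invariant under the C^*-action: at x = [p,q] it says that the
  rank-one tensor of tau x = [conj q, conj p] equals that of x. Since p and q are nonzero on
  hat Z, a rank-one tensor p \<otimes> q determines (p,q) up to (cp, q/c), hence tau x = x.\<close>

lemma orbit_self: "z \<in> orbit z"
proof -
  have "z = (cscale 1 (fst z), cscale (inverse 1) (snd z))"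
    by (simp add: cscale_def vec_eq_iff)
  then show ?thesis unfolding orbit_def by (intro CollectI exI[of _ 1]) simp
qed

lemma orbit_coord_prod_invariant:
  assumes "w \<in> orbit z"
  shows "fst w $ i * snd w $ j = fst z $ i * snd z $ j"
proof -
  from assms obtain c where "c \<noteq> 0" "w = (cscale c (fst z), cscale (inverse c) (snd z))"
    unfolding orbit_def by blast
  then show ?thesis by (simp add: cscale_def field_simps)
qed

lemma orbit_cscale:
  assumes "c \<noteq> 0"
  shows "orbit (cscale c p, cscale (inverse c) q) = orbit (p, q)"
proof
  show "orbit (cscale c p, cscale (inverse c) q) \<subseteq> orbit (p, q)"
  proof
    fix y assume "y \<in> orbit (cscale c p, cscale (inverse c) q)"
    then obtain d where "d \<noteq> 0" "y = (cscale d (cscale c p), cscale (inverse d) (cscale (inverse c) q))"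
      unfolding orbit_def by auto
    moreover have "cscale d (cscale c p) = cscale (d * c) p"
      and "cscale (inverse d) (cscale (inverse c) q) = cscale (inverse (d * c)) q"
      by (simp_all add: cscale_def vec_eq_iff)
    ultimately show "y \<in> orbit (p, q)"
      using assms unfolding orbit_def by (intro CollectI exI[of _ "d * c"]) simp
  qed
next
  show "orbit (p, q) \<subseteq> orbit (cscale c p, cscale (inverse c) q)"
  proof
    fix y assume "y \<in> orbit (p, q)"
    then obtain d where "d \<noteq> 0" "y = (cscale d p, cscale (inverse d) q)"
      unfolding orbit_def by auto
    moreover have "cscale d p = cscale (d / c) (cscale c p)"
      and "cscale (inverse d) q = cscale (inverse (d / c)) (cscale (inverse c) q)"
      using assms by (simp_all add: cscale_def vec_eq_iff field_simps)
    ultimately show "y \<in> orbit (cscale c p, cscale (inverse c) q)"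
      using assms unfolding orbit_def by (intro CollectI exI[of _ "d / c"]) simp
  qed
qed

lemma orbit_eq_if_coord_prods_eq:
  assumes prod_eq: "\<And>i j. p' $ i * q' $ j = p $ i * q $ j"
    and pa: "p $ a \<noteq> 0" and qb: "q $ b \<noteq> 0"
  shows "orbit (p', q') = orbit (p, q)"
proof -
  have ab: "p' $ a * q' $ b = p $ a * q $ b" by (rule prod_eq)
  then have p'a: "p' $ a \<noteq> 0" and pq_ab: "p $ a * q $ b \<noteq> 0" using pa qb by auto
  define c where "c = p' $ a / p $ a"
  have c: "c \<noteq> 0" using pa p'a by (simp add: c_def)
  have "p' $ i = c * p $ i" for i
  proof -
    have "p' $ i * (p $ a * q $ b) = p' $ a * (p' $ i * q' $ b)"
      by (simp only: ab [symmetric] ac_simps)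
    also have "\<dots> = (c * p $ i) * (p $ a * q $ b)"
      using pa by (simp add: prod_eq c_def)
    finally show ?thesis using pq_ab by simp
  qed
  moreover have "q' $ j = inverse c * q $ j" for j
    using prod_eq[of a j] pa p'a by (simp add: c_def field_simps)
  ultimately have "p' = cscale c p" "q' = cscale (inverse c) q"
    by (simp_all add: cscale_def vec_eq_iff)
  then show ?thesis using orbit_cscale[OF c] by simp
qed

lemma tau_orbit: "tau (orbit (p, q)) = orbit (cconj q, cconj p)"
proof
  show "tau (orbit (p, q)) \<subseteq> orbit (cconj q, cconj p)"
  proof
    fix y assume "y \<in> tau (orbit (p, q))"
    then obtain c where "c \<noteq> 0" "y = (cconj (cscale (inverse c) q), cconj (cscale c p))"
      unfolding tau_def orbit_def by auto
    then show "y \<in> orbit (cconj q, cconj p)"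
      unfolding orbit_def
      by (intro CollectI exI[of _ "cnj (inverse c)"]) (simp add: cscale_def cconj_def vec_eq_iff)
  qed
next
  show "orbit (cconj q, cconj p) \<subseteq> tau (orbit (p, q))"
  proof
    fix y assume "y \<in> orbit (cconj q, cconj p)"
    then obtain d where d: "d \<noteq> 0" "y = (cscale d (cconj q), cscale (inverse d) (cconj p))"
      unfolding orbit_def by auto
    define c where "c = cnj (inverse d)"
    have "(cscale c p, cscale (inverse c) q) \<in> orbit (p, q)"
      using d unfolding orbit_def c_def by auto
    moreover have "y = (\<lambda>(p, q). (cconj q, cconj p)) (cscale c p, cscale (inverse c) q)"
      using d by (simp add: c_def cscale_def cconj_def vec_eq_iff)
    ultimately show "y \<in> tau (orbit (p, q))" unfolding tau_def by blast
  qed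
qed

lemma hatZ_exists_nonzero:
  assumes "(p, q) \<in> (hatZ :: ('n::finite) hpt set)"
  shows "\<exists>a. p $ a \<noteq> 0" and "\<exists>b. q $ b \<noteq> 0"
proof -
  have "False" if "\<forall>a. p $ a = 0" using assms that by (simp add: hatZ_def bform_def)
  then show "\<exists>a. p $ a \<noteq> 0" by blast
  have "False" if "\<forall>b. q $ b = 0" using assms that by (simp add: hatZ_def bform_def)
  then show "\<exists>b. q $ b \<noteq> 0" by blast
qed

definition coord_prod :: "'n option \<Rightarrow> 'n option \<Rightarrow> ('n::finite) hpt set \<Rightarrow> complex" where
  "coord_prod i j y = (SOME v. \<exists>z\<in>y. v = fst z $ i * snd z $ j)"

lemma coord_prod_orbit: "coord_prod i j (orbit z) = fst z $ i * snd z $ j"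
proof -
  have "\<exists>w\<in>orbit z. coord_prod i j (orbit z) = fst w $ i * snd w $ j"
    unfolding coord_prod_def by (rule someI_ex) (use orbit_self in blast)
  then show ?thesis using orbit_coord_prod_invariant by metis
qed

lemma holo_on_coord_prod: "holo_on (\<lambda>w::('n::finite) hpt. fst w $ i * snd w $ j) UNIV"
  unfolding holo_on_def
proof
  fix w :: "'n hpt"
  let ?D = "\<lambda>h::'n hpt. fst w $ i * snd h $ j + fst h $ i * snd w $ j"
  have "((\<lambda>w. fst w $ i * snd w $ j) has_derivative ?D) (at w)"
    by (auto intro!: derivative_eq_intros bounded_linear_imp_has_derivative
        bounded_linear_compose[OF bounded_linear_vec_nth bounded_linear_fst]
        bounded_linear_compose[OF bounded_linear_vec_nth bounded_linear_snd])
  moreover have "\<forall>h. ?D (iscale h) = \<i> * ?D h"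
    by (simp add: iscale_def cscale_def algebra_simps)
  ultimately show "\<exists>D. ((\<lambda>w. fst w $ i * snd w $ j) has_derivative D) (at w)
      \<and> (\<forall>h. D (iscale h) = \<i> * D h)"
    by blast
qed

lemma coord_prod_in_Ohat: "coord_prod i j \<in> Ohat"
  unfolding Ohat_def holo_on_hatZ_def
  using holo_on_coord_prod[of i j] by (auto simp: coord_prod_orbit intro!: exI[of _ UNIV])

lemma istopology_hatD_quotient:
  "istopology (\<lambda>U. U \<subseteq> (hatD :: ('n::finite) hpt set set) \<and>
     openin (top_of_set hatZ) {z \<in> hatZ. orbit z \<in> U})"
  unfolding istopology_def
proof (rule conjI; intro allI impI)
  fix S T :: "'n hpt set set"
  assume "S \<subseteq> hatD \<and> openin (top_of_set hatZ) {z \<in> hatZ. orbit z \<in> S}"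
    and "T \<subseteq> hatD \<and> openin (top_of_set hatZ) {z \<in> hatZ. orbit z \<in> T}"
  moreover have "{z \<in> hatZ. orbit z \<in> S \<inter> T} = {z \<in> hatZ. orbit z \<in> S} \<inter> {z \<in> hatZ. orbit z \<in> T}"
    by auto
  ultimately show "S \<inter> T \<subseteq> hatD \<and> openin (top_of_set hatZ) {z \<in> hatZ. orbit z \<in> S \<inter> T}"
    by auto
next
  fix K :: "'n hpt set set set"
  assume "\<forall>S\<in>K. S \<subseteq> hatD \<and> openin (top_of_set hatZ) {z \<in> hatZ. orbit z \<in> S}"
  moreover have "{z \<in> hatZ. orbit z \<in> \<Union>K} = (\<Union>S\<in>K. {z \<in> hatZ. orbit z \<in> S})"
    by auto
  ultimately show "\<Union>K \<subseteq> hatD \<and> openin (top_of_set hatZ) {z \<in> hatZ. orbit z \<in> \<Union>K}"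
    by auto
qed

lemma openin_hatD_top:
  "openin hatD_top U \<longleftrightarrow> U \<subseteq> hatD \<and> openin (top_of_set hatZ) {z \<in> hatZ. orbit z \<in> U}"
  unfolding hatD_top_def by (subst topology_inverse'[OF istopology_hatD_quotient]) simp

lemma topspace_hatD_top: "topspace hatD_top = hatD"
proof -
  have hatZ_saturated: "{z \<in> hatZ. orbit z \<in> hatD} = hatZ" unfolding hatD_def by auto
  have "openin hatD_top hatD" unfolding openin_hatD_top hatZ_saturated by simp
  moreover have "topspace hatD_top \<subseteq> hatD" using openin_hatD_top openin_topspace by blast
  ultimately show ?thesis using openin_subset by blast
qed

lemma topspace_A_top_subset: "topspace A_top \<subseteq> Ohat"
  unfolding A_top_def by auto

lemma openin_A_top_eval_ball:
  assumes "x \<in> hatD" "g \<in> Ohat" "e > 0"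
  shows "openin A_top {h \<in> Ohat. dist (g x) (h x) < e}"
proof -
  have "compactin hatD_top {x}" using assms(1) by (simp add: topspace_hatD_top)
  then have "{h \<in> Ohat. seminorm {x} (\<lambda>y. h y - g y) < e} \<in>
      {{h \<in> Ohat. seminorm K (\<lambda>y. h y - f y) < e} | f K e.
        f \<in> Ohat \<and> compactin hatD_top K \<and> e > 0}"
    using assms by blast
  then have "openin A_top {h \<in> Ohat. seminorm {x} (\<lambda>y. h y - g y) < e}"
    unfolding A_top_def by (rule topology_generated_by_Basis)
  then show ?thesis by (simp add: seminorm_def dist_norm norm_minus_commute)
qed

lemma continuous_map_delta:
  assumes "x \<in> hatD"
  shows "continuous_map A_top euclidean (delta x)"
  unfolding continuous_map_def
proof (intro conjI allI impI)
  fix U :: "complex set"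
  assume "openin euclidean U"
  show "openin A_top {g \<in> topspace A_top. delta x g \<in> U}"
  proof (subst openin_subopen, intro ballI)
    fix g assume g: "g \<in> {g \<in> topspace A_top. delta x g \<in> U}"
    have "open U" "g x \<in> U" using \<open>openin euclidean U\<close> g by (simp_all add: delta_def)
    then obtain e where e: "e > 0" "ball (g x) e \<subseteq> U" using open_contains_ball by blast
    let ?T = "{h \<in> Ohat. dist (g x) (h x) < e}"
    have "openin A_top ?T"
      using openin_A_top_eval_ball assms g e(1) topspace_A_top_subset by blast
    moreover have "g \<in> ?T" using g e(1) topspace_A_top_subset by auto
    moreover have "?T \<subseteq> {g \<in> topspace A_top. delta x g \<in> U}"
      using openin_subset[OF \<open>openin A_top ?T\<close>] e(2) by (auto simp: delta_def)
    ultimately show "\<exists>T. openin A_top T \<and> g \<in> T \<and> T \<subseteq> {g \<in> topspace A_top. delta x g \<in> U}"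
      by blast
  qed
qed simp

lemma delta_star_iff_Dext:
  assumes "x \<in> hatD"
  shows "(\<forall>f\<in>Ohat. delta x (astar f) = cnj (delta x f)) \<longleftrightarrow> x \<in> Dext"
proof
  assume star: "\<forall>f\<in>Ohat. delta x (astar f) = cnj (delta x f)"
  obtain p q where pq: "(p, q) \<in> hatZ" "x = orbit (p, q)"
    using assms unfolding hatD_def by auto
  have "coord_prod i j (tau x) = coord_prod i j x" for i j
    using star coord_prod_in_Ohat[of i j] by (simp add: delta_def astar_def)
  then have "cconj q $ i * cconj p $ j = p $ i * q $ j" for i j
    using pq(2) by (simp add: tau_orbit coord_prod_orbit)
  moreover obtain a b where "p $ a \<noteq> 0" "q $ b \<noteq> 0"
    using hatZ_exists_nonzero[OF pq(1)] by blast
  ultimately have "orbit (cconj q, cconj p) = orbit (p, q)"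
    by (rule orbit_eq_if_coord_prods_eq)
  then have "tau x = x" using pq(2) by (simp add: tau_orbit)
  then show "x \<in> Dext" using assms by (simp add: Dext_def)
qed (simp add: Dext_def delta_def astar_def)

theorem proposition4p8:
  fixes x :: "('n::finite) hpt set"
  assumes "x \<in> hatD"
  shows "continuous_map A_top euclidean (delta x)
    \<and> (\<forall>f\<in>Ohat. \<forall>g\<in>Ohat. delta x (aadd f g) = delta x f + delta x g)
    \<and> (\<forall>f\<in>Ohat. \<forall>c. delta x (asmul c f) = c * delta x f)
    \<and> (\<forall>f\<in>Ohat. \<forall>g\<in>Ohat. delta x (amul f g) = delta x f * delta x g)
    \<and> delta x aone = 1
    \<and> ((\<forall>f\<in>Ohat. delta x (astar f) = cnj (delta x f)) \<longleftrightarrow> x \<in> Dext)"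
  using continuous_map_delta[OF assms] delta_star_iff_Dext[OF assms]
  by (simp add: delta_def aadd_def asmul_def amul_def aone_def)

end
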